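(* For every temporal oriented tree $\mathcal T$, the connectivity graph $G$ of $\mathcal T$ is weakly chordal, i.e., it contains neither an induced cycle of length at least $5$ nor the complement of such a cycle as an induced subgraph.
   Context: A temporal digraph is a pair $(D,\lambda)$ with $D=(V,A)$ a finite digraph and $\lambda:A\to 2^{\{1,\dots,t_{\max}\}}$ giving the time-steps at which each arc is active. A temporal oriented tree $\mathcal T=(T,\lambda)$ is one whose underlying digraph $T$ is an orientation of a tree. A temporal path is a sequence $(v_1,v_2,t_1),\dots,(v_{k-1},v_k,t_{k-1})$ with pairwise distinct $v_i$, $\overrightarrow{v_iv_{i+1}}\in A$, $t_i\in\lambda(\overrightarrow{v_iv_{i+1}})$ and $t_1<\dots<t_{k-1}$. Two vertices $u\ne v$ are temporally connected if there is a temporal path from $u$ to $v$ or from $v$ to $u$. The connectivity graph of $\mathcal T$ is the undirected graph $G$ with $V(G)=V(T)$ and $uv\in E(G)$ iff $u\neq v$ and $u,v$ are temporally connected. *)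

theory Defs
  imports Main
begin

definition temporal_digraph :: "'a set \<Rightarrow> ('a \<times> 'a) set \<Rightarrow> ('a \<times> 'a \<Rightarrow> nat set) \<Rightarrow> nat \<Rightarrow> bool" where
  "temporal_digraph V A lam tmax \<longleftrightarrow>
     finite V \<and> A \<subseteq> V \<times> V \<and> (\<forall>a\<in>A. lam a \<subseteq> {1..tmax})"

definition und_adj :: "('a \<times> 'a) set \<Rightarrow> 'a \<Rightarrow> 'a \<Rightarrow> bool" where
  "und_adj A u v \<longleftrightarrow> (u, v) \<in> A \<or> (v, u) \<in> A"

definition is_und_tree :: "'a set \<Rightarrow> ('a \<times> 'a) set \<Rightarrow> bool" where
  "is_und_tree V A \<longleftrightarrow>
     V \<noteq> {} \<and>
     (\<forall>u v. und_adj A u v \<longrightarrow> u \<in> V \<and> v \<in> V \<and> u \<noteq> v) \<and>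
     (\<forall>u\<in>V. \<forall>v\<in>V. (u, v) \<in> {(x, y). und_adj A x y}\<^sup>*) \<and>
     \<not> (\<exists>cs. length cs \<ge> 3 \<and> distinct cs \<and>
           (\<forall>i < length cs. und_adj A (cs ! i) (cs ! ((i + 1) mod length cs))))"

definition oriented_tree :: "'a set \<Rightarrow> ('a \<times> 'a) set \<Rightarrow> bool" where
  "oriented_tree V A \<longleftrightarrow> A \<subseteq> V \<times> V \<and> (\<forall>u v. (u, v) \<in> A \<longrightarrow> (v, u) \<notin> A) \<and> is_und_tree V A"

definition temporal_path :: "('a \<times> 'a) set \<Rightarrow> ('a \<times> 'a \<Rightarrow> nat set) \<Rightarrow> 'a list \<Rightarrow> nat list \<Rightarrow> bool" where
  "temporal_path A lam vs ts \<longleftrightarrow>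
     length vs \<ge> 2 \<and> length ts = length vs - 1 \<and> distinct vs \<and>
     (\<forall>i < length ts. (vs ! i, vs ! (i + 1)) \<in> A \<and> ts ! i \<in> lam (vs ! i, vs ! (i + 1))) \<and>
     sorted_wrt (<) ts"

definition temporal_path_from_to :: "('a \<times> 'a) set \<Rightarrow> ('a \<times> 'a \<Rightarrow> nat set) \<Rightarrow> 'a \<Rightarrow> 'a \<Rightarrow> bool" where
  "temporal_path_from_to A lam u v \<longleftrightarrow>
     (\<exists>vs ts. temporal_path A lam vs ts \<and> hd vs = u \<and> last vs = v)"

definition conn_edge :: "'a set \<Rightarrow> ('a \<times> 'a) set \<Rightarrow> ('a \<times> 'a \<Rightarrow> nat set) \<Rightarrow> 'a \<Rightarrow> 'a \<Rightarrow> bool" where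
  "conn_edge V A lam u v \<longleftrightarrow> u \<in> V \<and> v \<in> V \<and> u \<noteq> v \<and>
     (temporal_path_from_to A lam u v \<or> temporal_path_from_to A lam v u)"

definition induced_cycle :: "'a set \<Rightarrow> ('a \<Rightarrow> 'a \<Rightarrow> bool) \<Rightarrow> 'a list \<Rightarrow> bool" where
  "induced_cycle V E cs \<longleftrightarrow> distinct cs \<and> set cs \<subseteq> V \<and>
     (\<forall>i < length cs. \<forall>j < length cs. i \<noteq> j \<longrightarrow>
        (E (cs ! i) (cs ! j) \<longleftrightarrow> j = (i + 1) mod length cs \<or> i = (j + 1) mod length cs))"

definition complement_graph :: "('a \<Rightarrow> 'a \<Rightarrow> bool) \<Rightarrow> 'a \<Rightarrow> 'a \<Rightarrow> bool" where
  "complement_graph E u v \<longleftrightarrow> u \<noteq> v \<and> \<not> E u v"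

definition weakly_chordal :: "'a set \<Rightarrow> ('a \<Rightarrow> 'a \<Rightarrow> bool) \<Rightarrow> bool" where
  "weakly_chordal V E \<longleftrightarrow>
     \<not> (\<exists>cs. length cs \<ge> 5 \<and> induced_cycle V E cs) \<and>
     \<not> (\<exists>cs. length cs \<ge> 5 \<and> induced_cycle V (complement_graph E) cs)"

end

theory Submission
  imports Defs
begin

text \<open>Write u \<rightarrow> v if there is a temporal path from u to v. In an oriented tree u \<rightarrow> v and
  v \<rightarrow> u exclude each other, and an interior vertex of a temporal path is adjacent in the
  connectivity graph G to both of its ends. Deleting the tree edge under the first arc of a path
  a \<rightarrow> b shows: if b and d are joined by a walk in G that avoids a and has no two consecutive
  vertices adjacent to a, then a \<rightarrow> b iff a \<rightarrow> d.

  Consequently every vertex of an induced cycle of length at least 4 in G reaches both or none of its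
  two neighbours, so such a cycle is even; this excludes C5 and, as C5 is self-complementary, its
  complement. In the complement of a cycle of length at least 6 every vertex reaches all or none of
  its G-neighbours, which fails on a triangle. Finally, in an induced cycle of length at least 6 the
  temporal paths realising the edges c0c1 and c3c4 cannot meet, so some tree edge separates them;
  two cycle edges crossing that tree edge cross it along the same arc, and splicing their paths there
  yields a chord.\<close>

lemma exists_crossing_step:
  assumes "\<not> P (f a)" "P (f b)" "a \<le> b"
  shows "\<exists>i. a \<le> i \<and> i < b \<and> \<not> P (f i) \<and> P (f (Suc i))"
  using assms
proof (induction b)
  case (Suc b)
  then show ?case
    by (cases "P (f b) \<and> a \<le> b") (force, metis le_Suc_eq lessI)
qed simp

lemma successively_propagate:
  "successively (\<lambda>p q. P p \<longrightarrow> P q) xs \<Longrightarrow> xs \<noteq> [] \<Longrightarrow> P (hd xs) \<Longrightarrow> P (last xs)"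
  by (induction xs rule: induct_list012) auto

lemma rtrancl_imp_distinct_walk:
  assumes "(u, v) \<in> R\<^sup>*"
  shows "\<exists>xs. xs \<noteq> [] \<and> hd xs = u \<and> last xs = v \<and> distinct xs \<and> successively (\<lambda>a b. (a, b) \<in> R) xs"
  using assms
proof (induction rule: rtrancl_induct)
  case base
  then show ?case by (intro exI[of _ "[u]"]) auto
next
  case (step v w)
  then obtain xs where xs: "xs \<noteq> []" "hd xs = u" "last xs = v" "distinct xs"
    "successively (\<lambda>a b. (a, b) \<in> R) xs" by blast
  show ?case
  proof (cases "w \<in> set xs")
    case True
    then obtain ys zs where xs_split: "xs = ys @ w # zs" by (meson split_list)
    have "successively (\<lambda>a b. (a, b) \<in> R) (ys @ [w])"
      using xs(5) unfolding xs_split by (auto simp: successively_append_iff successively_Cons)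
    moreover have "hd (ys @ [w]) = u" using xs(2) xs_split by (cases ys) auto
    moreover have "distinct (ys @ [w])" using xs(4) xs_split by auto
    ultimately show ?thesis by (intro exI[of _ "ys @ [w]"]) auto
  next
    case False
    have "successively (\<lambda>a b. (a, b) \<in> R) (xs @ [w])"
      using xs step by (auto simp: successively_append_iff)
    then show ?thesis using xs False by (intro exI[of _ "xs @ [w]"]) auto
  qed
qed

lemma distinct_hd_neq_last: "distinct xs \<Longrightarrow> 2 \<le> length xs \<Longrightarrow> hd xs \<noteq> last xs"
  by (cases xs) auto

lemma nth_neq_last_Suc_less: "i < length xs \<Longrightarrow> xs ! i \<noteq> last xs \<Longrightarrow> Suc i < length xs"
  by (metis Suc_lessI diff_Suc_1 last_conv_nth list.size(3) not_less_zero)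

lemma distinct_nth_notin_take_drop:
  assumes "distinct ws" "i < length ws"
  shows "ws ! i \<notin> set (take i ws)" "ws ! i \<notin> set (drop (Suc i) ws)"
proof -
  have "distinct (take i ws @ ws ! i # drop (Suc i) ws)" using assms id_take_nth_drop by metis
  then show "ws ! i \<notin> set (take i ws)" "ws ! i \<notin> set (drop (Suc i) ws)" by auto
qed

lemma sorted_take_drop_less:
  fixes xs ys :: "nat list"
  assumes "sorted_wrt (<) xs" "sorted_wrt (<) ys" "0 < i" "i \<le> length xs" "j < length ys"
    "xs ! (i - 1) < ys ! j"
  shows "\<forall>t\<in>set (take i xs). \<forall>s\<in>set (drop j ys). t < s"
proof (intro ballI)
  fix t s assume t: "t \<in> set (take i xs)" and s: "s \<in> set (drop j ys)"
  obtain k where k: "k < i" "t = xs ! k" using t assms(4) by (auto simp: in_set_conv_nth)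
  obtain l where l: "l < length ys - j" "s = ys ! (j + l)" using s by (auto simp: in_set_conv_nth)
  have "t \<le> xs ! (i - 1)"
    using sorted_wrt_nth_less[OF assms(1), of k "i - 1"] k assms(4) by (cases "k = i - 1") (auto intro: less_imp_le)
  moreover have "ys ! j \<le> s"
    using sorted_wrt_nth_less[OF assms(2), of j "j + l"] l by (cases "l = 0") (auto intro: less_imp_le)
  ultimately show "t < s" using assms(6) by linarith
qed

lemma mod_add_left_cancel_less:
  fixes k a b n :: nat
  assumes "(k + a) mod n = (k + b) mod n" "a < n" "b < n"
  shows "a = b"
proof -
  define r where "r = k mod n"
  have r: "r < n" using assms(2) by (simp add: r_def)
  have eq: "(r + a) mod n = (r + b) mod n" using assms(1) by (simp add: r_def mod_add_left_eq)
  have "(r + x) mod n = (if r + x < n then r + x else r + x - n)" if "x < n" for x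
    using r that by (auto simp: mod_if)
  then show ?thesis using eq assms(2,3) r by (auto split: if_splits)
qed

section \<open>Induced cycles\<close>

lemma induced_cycle_edge_iff:
  assumes "induced_cycle V R cs" "i < length cs" "j < length cs" "i \<noteq> j"
  shows "R (cs ! i) (cs ! j) \<longleftrightarrow>
    j = Suc i \<or> i = Suc j \<or> (i = 0 \<and> j = length cs - 1) \<or> (j = 0 \<and> i = length cs - 1)"
  using assms unfolding induced_cycle_def by (auto simp: mod_Suc)

lemma induced_cycle_rotate:
  assumes cyc: "induced_cycle V R cs"
  shows "induced_cycle V R (rotate k cs)"
  unfolding induced_cycle_def
proof (intro conjI allI impI)
  let ?n = "length cs"
  show "distinct (rotate k cs)" "set (rotate k cs) \<subseteq> V"
    using cyc by (simp_all add: induced_cycle_def)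
  have succ_iff: "(k + j) mod ?n = ((k + i) mod ?n + 1) mod ?n \<longleftrightarrow> j = (i + 1) mod ?n"
    if "i < ?n" "j < ?n" for i j
  proof -
    have "((k + i) mod ?n + 1) mod ?n = (k + (i + 1) mod ?n) mod ?n"
      by (simp add: mod_Suc_eq mod_add_right_eq)
    moreover have "0 < ?n" using that by linarith
    then have "(i + 1) mod ?n < ?n" by simp
    ultimately show ?thesis
      using mod_add_left_cancel_less[of k j ?n "(i + 1) mod ?n"] that by (auto simp: mod_add_right_eq)
  qed
  fix i j assume "i < length (rotate k cs)" "j < length (rotate k cs)" "i \<noteq> j"
  then have ij: "i < ?n" "j < ?n" "(k + i) mod ?n \<noteq> (k + j) mod ?n"
    using mod_add_left_cancel_less[of k i ?n j] by auto
  then have "0 < ?n" by linarith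
  then have "(k + i) mod ?n < ?n" "(k + j) mod ?n < ?n" by simp_all
  with cyc ij(3) show "R (rotate k cs ! i) (rotate k cs ! j) \<longleftrightarrow>
      j = (i + 1) mod length (rotate k cs) \<or> i = (j + 1) mod length (rotate k cs)"
    using succ_iff[OF ij(1,2)] succ_iff[OF ij(2,1)] ij unfolding induced_cycle_def
    by (simp add: nth_rotate)
qed

lemma induced_cycle_complement_edge_iff:
  assumes cyc: "induced_cycle V (complement_graph R) cs" and "i < length cs" "j < length cs" "i \<noteq> j"
  shows "R (cs ! i) (cs ! j) \<longleftrightarrow>
    \<not> (j = Suc i \<or> i = Suc j \<or> (i = 0 \<and> j = length cs - 1) \<or> (j = 0 \<and> i = length cs - 1))"
proof -
  have "cs ! i \<noteq> cs ! j" using cyc assms(2-4) by (simp add: induced_cycle_def nth_eq_iff_index_eq)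
  then show ?thesis using induced_cycle_edge_iff[OF assms] by (auto simp: complement_graph_def)
qed

lemma less_5_cases: "(i::nat) < 5 \<longleftrightarrow> i = 0 \<or> i = 1 \<or> i = 2 \<or> i = 3 \<or> i = 4"
  by auto

lemma induced_cycle_complement_5:
  assumes cyc: "induced_cycle V (complement_graph R) cs" and len: "length cs = 5"
    and sym: "\<And>u v. R u v \<Longrightarrow> R v u"
  shows "induced_cycle V R [cs ! 0, cs ! 2, cs ! 4, cs ! 1, cs ! 3]"
proof -
  have distinct: "distinct cs" and in_V: "set cs \<subseteq> V" using cyc by (auto simp: induced_cycle_def)
  have R: "R (cs ! 0) (cs ! 2)" "R (cs ! 2) (cs ! 4)" "R (cs ! 4) (cs ! 1)" "R (cs ! 1) (cs ! 3)"
    "R (cs ! 3) (cs ! 0)"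
    and not_R: "\<not> R (cs ! 0) (cs ! 4)" "\<not> R (cs ! 0) (cs ! 1)" "\<not> R (cs ! 2) (cs ! 1)"
    "\<not> R (cs ! 2) (cs ! 3)" "\<not> R (cs ! 4) (cs ! 3)"
    using induced_cycle_complement_edge_iff[OF cyc] len by auto
  show ?thesis unfolding induced_cycle_def
  proof (intro conjI allI impI)
    show "distinct [cs ! 0, cs ! 2, cs ! 4, cs ! 1, cs ! 3]"
      using nth_eq_iff_index_eq[OF distinct] len by auto
    show "set [cs ! 0, cs ! 2, cs ! 4, cs ! 1, cs ! 3] \<subseteq> V" using in_V len by auto
    fix i j assume "i < length [cs ! 0, cs ! 2, cs ! 4, cs ! 1, cs ! 3]"
      "j < length [cs ! 0, cs ! 2, cs ! 4, cs ! 1, cs ! 3]" and "i \<noteq> j"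
    then have "i < 5" "j < 5" by simp_all
    then show "R ([cs ! 0, cs ! 2, cs ! 4, cs ! 1, cs ! 3] ! i) ([cs ! 0, cs ! 2, cs ! 4, cs ! 1, cs ! 3] ! j) \<longleftrightarrow>
       j = (i + 1) mod length [cs ! 0, cs ! 2, cs ! 4, cs ! 1, cs ! 3] \<or>
       i = (j + 1) mod length [cs ! 0, cs ! 2, cs ! 4, cs ! 1, cs ! 3]"
      using \<open>i \<noteq> j\<close> R not_R sym unfolding less_5_cases by (elim disjE) auto
  qed
qed

section \<open>Temporal walks\<close>

text \<open>Temporal paths without the distinctness requirement, defined recursively so that they can be
  cut and glued; in an oriented tree every such walk is a path.\<close>

fun temporal_walk :: "('a \<times> 'a) set \<Rightarrow> ('a \<times> 'a \<Rightarrow> nat set) \<Rightarrow> 'a list \<Rightarrow> nat list \<Rightarrow> bool" where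
  "temporal_walk A lam [v] [] = True"
| "temporal_walk A lam (u # v # vs) (t # ts) \<longleftrightarrow>
     (u, v) \<in> A \<and> t \<in> lam (u, v) \<and> temporal_walk A lam (v # vs) ts \<and> (\<forall>s\<in>set ts. t < s)"
| "temporal_walk A lam _ _ = False"

lemma temporal_walk_iff_nth:
  "temporal_walk A lam vs ts \<longleftrightarrow>
     vs \<noteq> [] \<and> length ts = length vs - 1 \<and>
     (\<forall>i<length ts. (vs ! i, vs ! Suc i) \<in> A \<and> ts ! i \<in> lam (vs ! i, vs ! Suc i)) \<and>
     sorted_wrt (<) ts"
  by (induction A lam vs ts rule: temporal_walk.induct) (auto simp: All_less_Suc2)

lemma temporal_path_iff_walk:
  "temporal_path A lam vs ts \<longleftrightarrow> temporal_walk A lam vs ts \<and> distinct vs \<and> 2 \<le> length vs"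
  unfolding temporal_path_def temporal_walk_iff_nth by auto

lemma temporal_walk_arcs: "temporal_walk A lam vs ts \<Longrightarrow> successively (\<lambda>a b. (a, b) \<in> A) vs"
  by (induction A lam vs ts rule: temporal_walk.induct) auto

lemma temporal_walk_take:
  "temporal_walk A lam vs ts \<Longrightarrow> k < length vs \<Longrightarrow> temporal_walk A lam (take (Suc k) vs) (take k ts)"
  unfolding temporal_walk_iff_nth by (auto simp: min_def)

lemma temporal_walk_drop:
  "temporal_walk A lam vs ts \<Longrightarrow> k < length vs \<Longrightarrow> temporal_walk A lam (drop k vs) (drop k ts)"
  unfolding temporal_walk_iff_nth by auto

lemma temporal_walk_append:
  "temporal_walk A lam xs ts \<Longrightarrow> temporal_walk A lam ys ss \<Longrightarrow> last xs = hd ys \<Longrightarrow>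
   \<forall>t\<in>set ts. \<forall>s\<in>set ss. t < s \<Longrightarrow> temporal_walk A lam (xs @ tl ys) (ts @ ss)"
proof (induction A lam xs ts rule: temporal_walk.induct)
  case (1 A lam v)
  then show ?case by (cases ys) auto
qed auto

lemma temporal_walk_in_V:
  assumes "A \<subseteq> V \<times> V" "temporal_walk A lam vs ts" "2 \<le> length vs"
  shows "set vs \<subseteq> V"
proof
  fix v assume "v \<in> set vs"
  then obtain k where k: "k < length vs" "vs ! k = v" by (auto simp: in_set_conv_nth)
  have len: "length ts = length vs - 1" using assms(2) by (simp add: temporal_walk_iff_nth)
  show "v \<in> V"
  proof (cases "k < length ts")
    case True
    then have "(vs ! k, vs ! Suc k) \<in> A" using assms(2) unfolding temporal_walk_iff_nth by blast
    then show ?thesis using assms(1) k by auto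
  next
    case False
    then have "k - 1 < length ts" "Suc (k - 1) = k" using k len assms(3) by auto
    then have "(vs ! (k - 1), vs ! k) \<in> A" using assms(2) unfolding temporal_walk_iff_nth by metis
    then show ?thesis using assms(1) k by auto
  qed
qed

section \<open>Sides of a tree edge\<close>

locale temporal_oriented_tree =
  fixes V :: "'a set" and A :: "('a \<times> 'a) set" and lam :: "'a \<times> 'a \<Rightarrow> nat set"
  assumes oriented: "oriented_tree V A"
begin

abbreviation E :: "'a \<Rightarrow> 'a \<Rightarrow> bool" where "E \<equiv> und_adj A"
abbreviation reaches :: "'a \<Rightarrow> 'a \<Rightarrow> bool" where "reaches \<equiv> temporal_path_from_to A lam"
abbreviation G :: "'a \<Rightarrow> 'a \<Rightarrow> bool" where "G \<equiv> conn_edge V A lam"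

lemma arcs_subset: "A \<subseteq> V \<times> V"
  using oriented by (simp add: oriented_tree_def)

lemma arc_asym: "(u, v) \<in> A \<Longrightarrow> (v, u) \<notin> A"
  using oriented by (simp add: oriented_tree_def)

lemma adj_neq: "E u v \<Longrightarrow> u \<noteq> v"
  using oriented by (simp add: oriented_tree_def is_und_tree_def)

lemma tree_connected: "u \<in> V \<Longrightarrow> v \<in> V \<Longrightarrow> (u, v) \<in> {(x, y). E x y}\<^sup>*"
  using oriented by (simp add: oriented_tree_def is_und_tree_def)

lemma no_adj_cycle:
  "3 \<le> length cs \<Longrightarrow> distinct cs \<Longrightarrow> \<forall>i<length cs. E (cs ! i) (cs ! ((i + 1) mod length cs)) \<Longrightarrow> False"
  using oriented unfolding oriented_tree_def is_und_tree_def by blast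

lemma adj_sym: "E u v \<Longrightarrow> E v u"
  by (auto simp: und_adj_def)

lemma arcs_walk_adj: "successively (\<lambda>a b. (a, b) \<in> A) ws \<Longrightarrow> successively E ws"
  by (erule successively_mono) (auto simp: und_adj_def)

definition side :: "'a \<Rightarrow> 'a \<Rightarrow> 'a set" where
  "side x y = {v. (x, v) \<in> {(a, b). E a b \<and> {a, b} \<noteq> {x, y}}\<^sup>*}"

lemma side_self: "x \<in> side x y"
  by (simp add: side_def)

lemma side_adj_iff:
  assumes "E u v" "{u, v} \<noteq> {x, y}"
  shows "u \<in> side x y \<longleftrightarrow> v \<in> side x y"
proof -
  have "(u, v) \<in> {(a, b). E a b \<and> {a, b} \<noteq> {x, y}}" "(v, u) \<in> {(a, b). E a b \<and> {a, b} \<noteq> {x, y}}"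
    using assms adj_sym by (auto simp: insert_commute)
  then show ?thesis unfolding side_def by (blast intro: rtrancl_into_rtrancl)
qed

text \<open>This is where acyclicity of the tree is used.\<close>

lemma not_in_side_other:
  assumes "E x y"
  shows "y \<notin> side x y"
proof
  assume "y \<in> side x y"
  then have "(x, y) \<in> {(a, b). E a b \<and> {a, b} \<noteq> {x, y}}\<^sup>*" by (simp add: side_def)
  from rtrancl_imp_distinct_walk[OF this] obtain xs where xs: "xs \<noteq> []" "hd xs = x" "last xs = y" "distinct xs"
    and walk: "successively (\<lambda>a b. (a, b) \<in> {(a, b). E a b \<and> {a, b} \<noteq> {x, y}}) xs"
    by blast
  have "x \<noteq> y" using assms adj_neq by blast
  then have "length xs \<noteq> 1" using xs by (cases xs) auto
  moreover have "length xs \<noteq> 2"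
  proof
    assume "length xs = 2"
    then have "{xs ! 0, xs ! 1} \<noteq> {x, y}" "xs ! 0 = x" "xs ! 1 = y"
      using successively_nth[OF walk, of 0] xs by (auto simp: hd_conv_nth last_conv_nth)
    then show False by simp
  qed
  ultimately have len: "3 \<le> length xs" using xs(1) length_0_conv[of xs] by linarith
  have "E (xs ! i) (xs ! ((i + 1) mod length xs))" if i: "i < length xs" for i
  proof (cases "Suc i < length xs")
    case True
    then show ?thesis using successively_nth[OF walk True] by simp
  next
    case False
    then have "i = length xs - 1" using i by simp
    then have "xs ! i = y" "(i + 1) mod length xs = 0" using xs(1,3) by (auto simp: last_conv_nth)
    then show ?thesis using assms adj_sym xs(1,2) by (simp add: hd_conv_nth)
  qed
  then show False using no_adj_cycle len xs(4) by blast
qed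

lemma side_edge_cross:
  assumes "E x y" "E u v" "u \<in> side x y" "v \<notin> side x y"
  shows "u = x \<and> v = y"
proof -
  have "{u, v} = {x, y}" using assms side_adj_iff by blast
  then show ?thesis using assms(3,4) side_self not_in_side_other[OF assms(1)]
    by (auto simp: doubleton_eq_iff)
qed

lemma walk_crosses_edge:
  assumes walk: "successively E ws" and "q < length ws" "r < length ws"
    and "ws ! q \<in> side x y" "ws ! r \<notin> side x y" "E x y"
  shows "\<exists>i. Suc i < length ws \<and> {ws ! i, ws ! Suc i} = {x, y}"
proof (cases "q < r")
  case True
  then obtain i where i: "i < r" "ws ! i \<in> side x y" "ws ! Suc i \<notin> side x y"
    using exists_crossing_step[of "\<lambda>v. v \<notin> side x y" "(!) ws" q r] assms by auto
  then have "ws ! i = x \<and> ws ! Suc i = y"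
    using side_edge_cross[OF assms(6) successively_nth[OF walk]] assms(3) by auto
  then show ?thesis using i assms(3) by (intro exI[of _ i]) auto
next
  case False
  then have "r < q" using assms by (metis linorder_neqE_nat)
  then obtain i where i: "i < q" "ws ! i \<notin> side x y" "ws ! Suc i \<in> side x y"
    using exists_crossing_step[of "\<lambda>v. v \<in> side x y" "(!) ws" r q] assms by auto
  then have "ws ! Suc i = x \<and> ws ! i = y"
    using side_edge_cross[OF assms(6) adj_sym[OF successively_nth[OF walk]]] assms(2) by auto
  then show ?thesis using i assms(2) by (intro exI[of _ i]) auto
qed

lemma walk_same_side:
  assumes "successively E ws" "E x y" "\<not> (x \<in> set ws \<and> y \<in> set ws)" "a \<in> set ws" "b \<in> set ws"
  shows "a \<in> side x y \<longleftrightarrow> b \<in> side x y"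
proof (rule ccontr)
  obtain q r where "q < length ws" "ws ! q = a" "r < length ws" "ws ! r = b"
    using assms(4,5) by (auto simp: in_set_conv_nth)
  moreover assume "\<not> (a \<in> side x y \<longleftrightarrow> b \<in> side x y)"
  ultimately obtain i where i: "Suc i < length ws" "{ws ! i, ws ! Suc i} = {x, y}"
    using walk_crosses_edge[OF assms(1) _ _ _ _ assms(2)] by metis
  then have "ws ! i \<in> set ws" "ws ! Suc i \<in> set ws" by auto
  then show False using assms(3) i(2) by (auto simp: doubleton_eq_iff)
qed

lemma walk_sides_at_crossing:
  assumes walk: "successively E ws" and "distinct ws" "E x y"
    and p: "Suc p < length ws" "{ws ! p, ws ! Suc p} = {x, y}"
  shows "hd ws \<in> side x y \<longleftrightarrow> ws ! p \<in> side x y"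
    and "last ws \<in> side x y \<longleftrightarrow> ws ! Suc p \<in> side x y"
proof -
  have "ws ! Suc p \<notin> set (take (Suc p) ws)" "ws ! p \<notin> set (drop (Suc p) ws)"
    using distinct_nth_notin_take_drop assms(2) p(1) Suc_lessD by blast+
  then have avoid: "\<not> (x \<in> set (take (Suc p) ws) \<and> y \<in> set (take (Suc p) ws))"
    "\<not> (x \<in> set (drop (Suc p) ws) \<and> y \<in> set (drop (Suc p) ws))"
    using p(2) by (auto simp: doubleton_eq_iff)
  have "hd ws \<in> set (take (Suc p) ws)" "ws ! p \<in> set (take (Suc p) ws)"
    using p(1) by (cases ws, simp_all add: take_Suc_conv_app_nth)
  then show "hd ws \<in> side x y \<longleftrightarrow> ws ! p \<in> side x y"
    using walk_same_side[OF _ assms(3) avoid(1)] walk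
    by (metis append_take_drop_id successively_append_iff)
  have "last ws \<in> set (drop (Suc p) ws)" "ws ! Suc p \<in> set (drop (Suc p) ws)"
    using p(1) by (metis last_drop last_in_set drop_eq_Nil2 not_le, metis Cons_nth_drop_Suc list.set_intros(1))
  then show "last ws \<in> side x y \<longleftrightarrow> ws ! Suc p \<in> side x y"
    using walk_same_side[OF _ assms(3) avoid(2)] walk
    by (metis append_take_drop_id successively_append_iff)
qed

lemma separating_edge:
  assumes "successively E P" "successively E R" "set P \<inter> set R = {}"
    and "p \<in> set P" "r \<in> set R" "p \<in> V" "r \<in> V"
  shows "\<exists>x y. E x y \<and> set P \<subseteq> side x y \<and> set R \<inter> side x y = {}"
proof -
  have "\<exists>x y. E x y \<and> set P \<subseteq> side x y \<and> set R \<inter> side x y = {}"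
    if "successively E ps" "distinct ps" "ps \<noteq> []" "hd ps \<in> set P" "last ps \<in> set R" for ps
    using that
  proof (induction ps)
    case (Cons a ps)
    show ?case
    proof (cases "ps = [] \<or> hd ps \<in> set P")
      case True
      then show ?thesis using Cons assms(3) by (cases "ps = []") (auto simp: successively_Cons)
    next
      case False
      define y where "y = hd ps"
      have Eay: "E a y" and aP: "a \<in> set P" and a_ps: "a \<notin> set ps" and walk: "successively E ps"
        using Cons.prems False by (auto simp: successively_Cons y_def)
      have "set P \<subseteq> side a y"
        using walk_same_side[OF assms(1) Eay _ aP] False side_self by (auto simp: y_def)
      moreover have "last ps \<notin> side a y"
        using walk_same_side[OF walk Eay, of y "last ps"] a_ps False not_in_side_other[OF Eay]
        by (auto simp: y_def)
      then have "set R \<inter> side a y = {}"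
        using walk_same_side[OF assms(2) Eay, of _ "last ps"] aP assms(3) Cons.prems False by auto
      ultimately show ?thesis using Eay by blast
    qed
  qed simp
  moreover obtain ps where "ps \<noteq> []" "hd ps = p" "last ps = r" "distinct ps"
    "successively (\<lambda>a b. (a, b) \<in> {(x, y). E x y}) ps"
    using rtrancl_imp_distinct_walk[OF tree_connected[OF assms(6,7)]] by blast
  ultimately show ?thesis using assms(4,5) by simp
qed

lemma directed_walk_cannot_enter_side:
  assumes "(x, y) \<in> A" and walk: "successively (\<lambda>a b. (a, b) \<in> A) ws"
    and "ws \<noteq> []" "hd ws \<notin> side x y" "last ws \<in> side x y"
  shows False
proof -
  obtain i where i: "i < length ws - 1" "ws ! i \<notin> side x y" "ws ! Suc i \<in> side x y"
    using exists_crossing_step[of "\<lambda>v. v \<in> side x y" "(!) ws" 0 "length ws - 1"] assms(3-5)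
    by (auto simp: hd_conv_nth last_conv_nth)
  have arc: "(ws ! i, ws ! Suc i) \<in> A" using successively_nth[OF walk] i(1) by auto
  then have "ws ! Suc i = x \<and> ws ! i = y"
    using side_edge_cross[of x y "ws ! Suc i" "ws ! i"] assms(1) i by (auto simp: und_adj_def)
  then show False using arc arc_asym assms(1) by auto
qed

lemma directed_walk_distinct: "successively (\<lambda>a b. (a, b) \<in> A) ws \<Longrightarrow> distinct ws"
proof (induction ws rule: induct_list012)
  case (3 a b ws)
  have ab: "(a, b) \<in> A" and walk: "successively (\<lambda>a b. (a, b) \<in> A) (b # ws)"
    using "3.prems" by auto
  have "a \<notin> set (b # ws)"
  proof
    assume "a \<in> set (b # ws)"
    then obtain ys zs where ws_split: "b # ws = ys @ a # zs" by (meson split_list)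
    have walk_back: "successively (\<lambda>a b. (a, b) \<in> A) (ys @ [a])"
      using walk unfolding ws_split by (auto simp: successively_append_iff successively_Cons)
    show False
    proof (cases ys)
      case Nil
      then show False using ws_split ab arc_asym by auto
    next
      case (Cons c cs)
      then have "hd (ys @ [a]) = b" using ws_split by simp
      then show False
        using directed_walk_cannot_enter_side[OF ab walk_back] side_self not_in_side_other[of a b] ab
        by (auto simp: und_adj_def)
    qed
  qed
  then show ?case using "3.IH"(2) walk by auto
qed auto

section \<open>Temporal reachability in an oriented tree\<close>

lemma temporal_walk_reaches:
  "temporal_walk A lam vs ts \<Longrightarrow> 2 \<le> length vs \<Longrightarrow> reaches (hd vs) (last vs)"
  unfolding temporal_path_from_to_def temporal_path_iff_walk
  using temporal_walk_arcs directed_walk_distinct by blast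

lemma reachesE:
  assumes "reaches u v"
  obtains vs ts where "temporal_walk A lam vs ts" "hd vs = u" "last vs = v" "distinct vs" "2 \<le> length vs"
  using assms unfolding temporal_path_from_to_def temporal_path_iff_walk by blast

lemma reaches_neq: "reaches u v \<Longrightarrow> u \<noteq> v"
  by (metis reachesE distinct_hd_neq_last)

lemma reaches_in_V: "reaches u v \<Longrightarrow> u \<in> V \<and> v \<in> V"
proof -
  assume "reaches u v"
  then obtain vs ts where "temporal_walk A lam vs ts" "hd vs = u" "last vs = v" "2 \<le> length vs"
    by (rule reachesE)
  then show ?thesis
    using temporal_walk_in_V[OF arcs_subset] hd_in_set[of vs] last_in_set[of vs] by fastforce
qed

lemma conn_iff_reaches: "G u v \<longleftrightarrow> reaches u v \<or> reaches v u"
  unfolding conn_edge_def using reaches_in_V reaches_neq by blast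

lemma conn_sym: "G u v \<Longrightarrow> G v u"
  using conn_iff_reaches by blast

lemma reaches_asym: "reaches u v \<Longrightarrow> \<not> reaches v u"
proof
  assume "reaches u v" "reaches v u"
  then obtain vs ts ws ss where
    vs: "temporal_walk A lam vs ts" "hd vs = u" "last vs = v" "2 \<le> length vs" and
    ws: "temporal_walk A lam ws ss" "hd ws = v" "last ws = u" "2 \<le> length ws"
    by (metis reachesE)
  have "successively (\<lambda>a b. (a, b) \<in> A) (vs @ tl ws)"
    using temporal_walk_arcs[OF vs(1)] temporal_walk_arcs[OF ws(1)] vs(3) ws(2,4)
    by (cases ws) (auto simp: successively_append_iff successively_Cons)
  then have "distinct (vs @ tl ws)" by (rule directed_walk_distinct)
  moreover have "hd (vs @ tl ws) = last (vs @ tl ws)" "2 \<le> length (vs @ tl ws)"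
    using vs ws by (cases vs; cases ws; auto)+
  ultimately show False using distinct_hd_neq_last by metis
qed

lemma conn_imp_reaches_iff: "G u v \<Longrightarrow> reaches u v \<longleftrightarrow> \<not> reaches v u"
  using conn_iff_reaches reaches_asym by blast

lemma conn_temporal_walkE:
  assumes "G u v"
  obtains vs ts where "temporal_walk A lam vs ts" "distinct vs" "2 \<le> length vs" "{hd vs, last vs} = {u, v}"
proof -
  from assms have "reaches u v \<or> reaches v u" by (simp add: conn_iff_reaches)
  then show thesis
  proof
    assume "reaches u v"
    then obtain vs ts where "temporal_walk A lam vs ts" "hd vs = u" "last vs = v" "distinct vs"
      "2 \<le> length vs" by (rule reachesE)
    then show thesis by (intro that[of vs ts]) auto
  next
    assume "reaches v u"
    then obtain vs ts where "temporal_walk A lam vs ts" "hd vs = v" "last vs = u" "distinct vs"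
      "2 \<le> length vs" by (rule reachesE)
    then show thesis by (intro that[of vs ts]) auto
  qed
qed

lemma reaches_interior:
  assumes walk: "temporal_walk A lam vs ts" and "a \<in> set vs" "a \<noteq> hd vs" "a \<noteq> last vs"
  shows "reaches (hd vs) a \<and> reaches a (last vs)"
proof -
  obtain k where k: "k < length vs" "vs ! k = a" using assms(2) by (auto simp: in_set_conv_nth)
  have "vs \<noteq> []" using k by auto
  then have "k \<noteq> 0" "k \<noteq> length vs - 1"
    using k assms(3,4) by (metis hd_conv_nth, metis last_conv_nth)
  then have "2 \<le> length (take (Suc k) vs)" "2 \<le> length (drop k vs)" using k(1) by auto
  moreover have "last (take (Suc k) vs) = a" "hd (drop k vs) = a"
    using k by (simp_all add: take_Suc_conv_app_nth hd_drop_conv_nth)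
  ultimately show ?thesis
    using temporal_walk_reaches[OF temporal_walk_take[OF walk k(1)]]
      temporal_walk_reaches[OF temporal_walk_drop[OF walk k(1)]] k(1) by auto
qed

lemma conn_interior:
  "temporal_walk A lam vs ts \<Longrightarrow> a \<in> set vs \<Longrightarrow> a \<noteq> hd vs \<Longrightarrow> a \<noteq> last vs \<Longrightarrow> G (hd vs) a \<and> G a (last vs)"
  using reaches_interior conn_iff_reaches by blast

lemma reaches_join:
  assumes walk: "temporal_walk A lam vs ts" "temporal_walk A lam ws ss"
    and "i < length vs" "Suc j < length ws" "vs ! i = ws ! j"
    and "\<forall>t\<in>set (take i ts). \<forall>s\<in>set (drop j ss). t < s"
  shows "reaches (hd vs) (last ws)"
proof -
  have "last (take (Suc i) vs) = hd (drop j ws)"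
    using assms(3-5) by (simp add: take_Suc_conv_app_nth hd_drop_conv_nth)
  from temporal_walk_append[OF temporal_walk_take[OF walk(1) assms(3)]
      temporal_walk_drop[OF walk(2)] this assms(6)]
  have "temporal_walk A lam (take (Suc i) vs @ drop (Suc j) ws) (take i ts @ drop j ss)"
    using assms(4) by (simp add: drop_Suc tl_drop)
  moreover have "hd (take (Suc i) vs @ drop (Suc j) ws) = hd vs"
    using assms(3) by (cases vs) auto
  ultimately show ?thesis using temporal_walk_reaches assms(3,4) by fastforce
qed

text \<open>Two temporal walks through a common vertex, which is not the last vertex of either: whichever
  walk leaves that vertex later can be entered from the other one.\<close>

lemma reaches_splice:
  assumes walk: "temporal_walk A lam vs ts" "temporal_walk A lam ws ss"
    and i: "Suc i < length vs" and j: "Suc j < length ws" and meet: "vs ! i = ws ! j"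
  shows "reaches (hd vs) (last ws) \<or> reaches (hd ws) (last vs)"
proof -
  have ne: "vs \<noteq> []" "ws \<noteq> []" using i j by auto
  have ts: "length ts = length vs - 1" "sorted_wrt (<) ts"
    and ss: "length ss = length ws - 1" "sorted_wrt (<) ss"
    using walk by (auto simp: temporal_walk_iff_nth)
  consider "i = 0" | "j = 0" | "0 < i" "0 < j" "ts ! (i - 1) < ss ! j" | "0 < i" "0 < j" "ss ! (j - 1) < ts ! i"
  proof (cases "i = 0 \<or> j = 0 \<or> ts ! (i - 1) < ss ! j")
    case False
    then have "ss ! (j - 1) < ss ! j" "ts ! (i - 1) < ts ! i"
      using sorted_wrt_nth_less[OF ss(2), of "j - 1" j] sorted_wrt_nth_less[OF ts(2), of "i - 1" i]
        i j ts(1) ss(1) by auto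
    with False that show ?thesis by auto
  qed auto
  then show ?thesis
  proof cases
    case 1
    then show ?thesis using reaches_join[OF walk _ j meet] i ne by simp
  next
    case 2
    then show ?thesis using reaches_join[OF walk(2,1) _ i meet[symmetric]] j ne by simp
  next
    case 3
    then have "\<forall>t\<in>set (take i ts). \<forall>s\<in>set (drop j ss). t < s"
      using i j ts(1) ss(1) by (intro sorted_take_drop_less[OF ts(2) ss(2)]) auto
    then have "reaches (hd vs) (last ws)" using reaches_join[OF walk _ j meet] i by simp
    then show ?thesis ..
  next
    case 4
    then have "\<forall>s\<in>set (take j ss). \<forall>t\<in>set (drop i ts). s < t"
      using i j ts(1) ss(1) by (intro sorted_take_drop_less[OF ss(2) ts(2)]) auto
    then have "reaches (hd ws) (last vs)" using reaches_join[OF walk(2,1) _ i meet[symmetric]] j by simp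
    then show ?thesis ..
  qed
qed

section \<open>Connectivity edges and tree edges\<close>

lemma conn_same_side:
  assumes "G p q" "E x y" "p \<noteq> x" "q \<noteq> x" "\<not> (G x p \<and> G x q)"
  shows "p \<in> side x y \<longleftrightarrow> q \<in> side x y"
proof -
  obtain vs ts where vs: "temporal_walk A lam vs ts" "distinct vs" "2 \<le> length vs"
    "{hd vs, last vs} = {p, q}"
    using assms(1) by (rule conn_temporal_walkE)
  have "vs \<noteq> []" using vs(3) by auto
  then have ends: "hd vs \<in> set vs" "last vs \<in> set vs" by simp_all
  have "x \<notin> set vs"
  proof
    assume "x \<in> set vs"
    moreover have "x \<noteq> hd vs" "x \<noteq> last vs" using vs(4) assms(3,4) by auto
    ultimately have "G (hd vs) x" "G x (last vs)" using conn_interior[OF vs(1)] by auto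
    then show False using assms(5) vs(4) conn_sym by (auto simp: doubleton_eq_iff)
  qed
  then have "hd vs \<in> side x y \<longleftrightarrow> last vs \<in> side x y"
    using walk_same_side[OF arcs_walk_adj[OF temporal_walk_arcs[OF vs(1)]] assms(2)] ends by blast
  then show ?thesis using vs(4) by (auto simp: doubleton_eq_iff)
qed

lemma conn_walk_same_side:
  assumes walk: "successively G zs" "zs \<noteq> []" and avoid: "x \<notin> set zs"
    and no_common: "successively (\<lambda>p q. \<not> (G x p \<and> G x q)) zs" and "E x y"
  shows "hd zs \<in> side x y \<longleftrightarrow> last zs \<in> side x y"
proof -
  have "successively (\<lambda>p q. p \<in> side x y \<longleftrightarrow> q \<in> side x y) zs"
    unfolding successively_conv_nth
  proof (intro allI impI)
    fix i assume i: "Suc i < length zs"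
    then have "zs ! i \<in> set zs" "zs ! Suc i \<in> set zs" by simp_all
    then have "zs ! i \<noteq> x" "zs ! Suc i \<noteq> x" using avoid by auto
    then show "zs ! i \<in> side x y \<longleftrightarrow> zs ! Suc i \<in> side x y"
      using conn_same_side[OF successively_nth[OF walk(1) i] assms(5)] successively_nth[OF no_common i]
      by blast
  qed
  then have "successively (\<lambda>p q. (p \<in> side x y \<longleftrightarrow> hd zs \<in> side x y) \<longrightarrow>
      (q \<in> side x y \<longleftrightarrow> hd zs \<in> side x y)) zs"
    by (rule successively_mono) blast
  then show ?thesis
    using successively_propagate[where P = "\<lambda>v. v \<in> side x y \<longleftrightarrow> hd zs \<in> side x y"] walk(2)
    by blast
qed

text \<open>Let (a, w) be the first arc of a temporal path from a to the start of the walk. No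
  connectivity edge of the walk leaves the side of w, whereas a temporal path from the end of the
  walk back to a would have to enter the side of a through the arc (w, a).\<close>

lemma reaches_along_conn_walk:
  assumes walk: "successively G zs" "zs \<noteq> []" and avoid: "a \<notin> set zs"
    and no_common: "successively (\<lambda>p q. \<not> (G a p \<and> G a q)) zs"
    and "G a (last zs)" "reaches a (hd zs)"
  shows "reaches a (last zs)"
proof -
  obtain vs ts where vs: "temporal_walk A lam vs ts" "hd vs = a" "last vs = hd zs" "distinct vs"
    "2 \<le> length vs"
    using assms(6) by (rule reachesE)
  then obtain w rest where vs_eq: "vs = a # w # rest"
    by (auto simp: Suc_le_length_iff numeral_2_eq_2)
  have arc: "(a, w) \<in> A" using temporal_walk_arcs[OF vs(1)] vs_eq by simp
  then have Eaw: "E a w" by (simp add: und_adj_def)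
  have "hd zs \<notin> side a w"
  proof -
    have "successively E (w # rest)"
      using arcs_walk_adj[OF temporal_walk_arcs[OF vs(1)]] vs_eq by simp
    moreover have "a \<notin> set (w # rest)" using vs(4) vs_eq by simp
    moreover have "hd zs \<in> set (w # rest)" using vs(3) vs_eq last_in_set[of "w # rest"] by simp
    ultimately show ?thesis
      using walk_same_side[of "w # rest" a w w "hd zs"] Eaw not_in_side_other[OF Eaw] by auto
  qed
  then have last_side: "last zs \<notin> side a w"
    using conn_walk_same_side[OF walk avoid no_common Eaw] by blast
  show ?thesis
  proof (rule ccontr)
    assume "\<not> reaches a (last zs)"
    then have "reaches (last zs) a" using assms(5) conn_iff_reaches by blast
    then obtain us ss where "temporal_walk A lam us ss" "hd us = last zs" "last us = a" "2 \<le> length us"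
      by (rule reachesE)
    then show False
      using directed_walk_cannot_enter_side[OF arc temporal_walk_arcs] last_side side_self by fastforce
  qed
qed

lemma reaches_along_conn_walk_iff:
  assumes "successively G zs" "zs \<noteq> []" "a \<notin> set zs" "successively (\<lambda>p q. \<not> (G a p \<and> G a q)) zs"
    "G a (hd zs)" "G a (last zs)"
  shows "reaches a (hd zs) \<longleftrightarrow> reaches a (last zs)"
proof
  show "reaches a (hd zs) \<Longrightarrow> reaches a (last zs)"
    using reaches_along_conn_walk assms by blast
  have "successively G (rev zs)" "successively (\<lambda>p q. \<not> (G a p \<and> G a q)) (rev zs)"
    using assms(1,4) conn_sym by (auto elim: successively_mono)
  then show "reaches a (last zs) \<Longrightarrow> reaches a (hd zs)"
    using reaches_along_conn_walk[of "rev zs" a] assms(2,3,5) by (simp add: hd_rev last_rev)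
qed

lemma reaches_iff_via_non_neighbour:
  assumes "G a b" "G a d" "G b v" "G v d" "\<not> G a v" "v \<noteq> a"
  shows "reaches a b \<longleftrightarrow> reaches a d"
proof -
  have "a \<noteq> b" "a \<noteq> d" using assms(1,2) by (auto simp: conn_edge_def)
  then show ?thesis using reaches_along_conn_walk_iff[of "[b, v, d]" a] assms by auto
qed

lemma conn_crossing_walkE:
  assumes "G u v" "E x y" "u \<in> side x y" "v \<notin> side x y"
  obtains vs ts i where "temporal_walk A lam vs ts" "Suc i < length vs" "{hd vs, last vs} = {u, v}"
    "{vs ! i, vs ! Suc i} = {x, y}"
    "hd vs \<in> side x y \<longleftrightarrow> vs ! i \<in> side x y" "last vs \<in> side x y \<longleftrightarrow> vs ! Suc i \<in> side x y"
proof -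
  obtain vs ts where vs: "temporal_walk A lam vs ts" "distinct vs" "2 \<le> length vs"
    "{hd vs, last vs} = {u, v}"
    using assms(1) by (rule conn_temporal_walkE)
  have walk: "successively E vs" using arcs_walk_adj[OF temporal_walk_arcs[OF vs(1)]] .
  have "vs \<noteq> []" using vs(3) by auto
  then have "u \<in> set vs" "v \<in> set vs" using vs(4) by (auto simp: doubleton_eq_iff)
  then obtain q r where "q < length vs" "vs ! q = u" "r < length vs" "vs ! r = v"
    by (auto simp: in_set_conv_nth)
  then obtain i where "Suc i < length vs" "{vs ! i, vs ! Suc i} = {x, y}"
    using walk_crosses_edge[OF walk _ _ _ _ assms(2)] assms(3,4) by metis
  then show thesis using that vs(1,4) walk_sides_at_crossing[OF walk vs(2) assms(2)] by blast
qed

text \<open>Two connectivity edges across the same tree edge cross it along the same arc, so their temporal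
  paths can be spliced there.\<close>

lemma conn_crossing_edges:
  assumes "E x y" "G u v" "G u' v'"
    and sides: "u \<in> side x y" "v \<notin> side x y" "u' \<in> side x y" "v' \<notin> side x y"
  shows "G u v' \<or> G u' v"
proof -
  let ?S = "side x y"
  obtain vs ts i where vs: "temporal_walk A lam vs ts" "Suc i < length vs" "{hd vs, last vs} = {u, v}"
    "{vs ! i, vs ! Suc i} = {x, y}" "hd vs \<in> ?S \<longleftrightarrow> vs ! i \<in> ?S" "last vs \<in> ?S \<longleftrightarrow> vs ! Suc i \<in> ?S"
    using conn_crossing_walkE[OF assms(2,1) sides(1,2)] by blast
  obtain ws ss j where ws: "temporal_walk A lam ws ss" "Suc j < length ws" "{hd ws, last ws} = {u', v'}"
    "{ws ! j, ws ! Suc j} = {x, y}" "hd ws \<in> ?S \<longleftrightarrow> ws ! j \<in> ?S" "last ws \<in> ?S \<longleftrightarrow> ws ! Suc j \<in> ?S"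
    using conn_crossing_walkE[OF assms(3,1) sides(3,4)] by blast
  have "(vs ! i, vs ! Suc i) \<in> A" "(ws ! j, ws ! Suc j) \<in> A"
    using successively_nth[OF temporal_walk_arcs[OF vs(1)] vs(2)]
      successively_nth[OF temporal_walk_arcs[OF ws(1)] ws(2)] by auto
  then have same_arc: "vs ! i = ws ! j" "vs ! Suc i = ws ! Suc j"
    using vs(4) ws(4) arc_asym by (auto simp: doubleton_eq_iff)
  have "x \<in> ?S" "y \<notin> ?S" using side_self not_in_side_other[OF assms(1)] by auto
  then have opposite: "vs ! i \<in> ?S \<longleftrightarrow> vs ! Suc i \<notin> ?S" using vs(4) by (auto simp: doubleton_eq_iff)
  have "reaches (hd vs) (last ws) \<or> reaches (hd ws) (last vs)"
    using reaches_splice[OF vs(1) ws(1) vs(2) ws(2) same_arc(1)] .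
  then have "G (hd vs) (last ws) \<or> G (hd ws) (last vs)" using conn_iff_reaches by blast
  then show ?thesis
    using vs(3,5,6) ws(3,5,6) same_arc opposite sides conn_sym by (auto simp: doubleton_eq_iff)
qed

lemma conn_walks_disjoint:
  assumes vs: "temporal_walk A lam vs ts" "{hd vs, last vs} = {u, v}"
    and ws: "temporal_walk A lam ws ss" "{hd ws, last ws} = {u', v'}"
    and disjoint: "{u, v} \<inter> {u', v'} = {}" and no_conn: "\<forall>p\<in>{u, v}. \<forall>q\<in>{u', v'}. \<not> G p q"
  shows "set vs \<inter> set ws = {}"
proof (rule ccontr)
  assume "set vs \<inter> set ws \<noteq> {}"
  then obtain m where m: "m \<in> set vs" "m \<in> set ws" by blast
  have "m \<notin> {hd vs, last vs}"
  proof
    assume "m \<in> {hd vs, last vs}"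
    then have "m \<in> {u, v}" "m \<notin> {hd ws, last ws}" using vs(2) ws(2) disjoint by auto
    then show False using conn_interior[OF ws(1) m(2)] ws(2) no_conn conn_sym
      by (auto simp: doubleton_eq_iff)
  qed
  moreover have "m \<notin> {hd ws, last ws}"
  proof
    assume "m \<in> {hd ws, last ws}"
    then have "m \<in> {u', v'}" "m \<notin> {hd vs, last vs}" using vs(2) ws(2) disjoint by auto
    then show False using conn_interior[OF vs(1) m(1)] vs(2) no_conn by (auto simp: doubleton_eq_iff)
  qed
  moreover obtain i j where "i < length vs" "vs ! i = m" "j < length ws" "ws ! j = m"
    using m by (auto simp: in_set_conv_nth)
  ultimately have "Suc i < length vs" "Suc j < length ws" "vs ! i = ws ! j"
    using nth_neq_last_Suc_less[of i vs] nth_neq_last_Suc_less[of j ws] by auto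
  then have "G (hd vs) (last ws) \<or> G (hd ws) (last vs)"
    using reaches_splice[OF vs(1) ws(1)] conn_iff_reaches by blast
  then show False using vs(2) ws(2) no_conn conn_sym by (auto simp: doubleton_eq_iff)
qed

lemma conn_edges_separated:
  assumes "G u v" "G u' v'" and disjoint: "{u, v} \<inter> {u', v'} = {}"
    and no_conn: "\<forall>p\<in>{u, v}. \<forall>q\<in>{u', v'}. \<not> G p q"
  shows "\<exists>x y. E x y \<and> {u, v} \<subseteq> side x y \<and> {u', v'} \<inter> side x y = {}"
proof -
  obtain vs ts where vs: "temporal_walk A lam vs ts" "distinct vs" "2 \<le> length vs"
    "{hd vs, last vs} = {u, v}"
    using assms(1) by (rule conn_temporal_walkE)
  obtain ws ss where ws: "temporal_walk A lam ws ss" "distinct ws" "2 \<le> length ws"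
    "{hd ws, last ws} = {u', v'}"
    using assms(2) by (rule conn_temporal_walkE)
  have "vs \<noteq> []" "ws \<noteq> []" using vs(3) ws(3) by auto
  then have ends: "{u, v} \<subseteq> set vs" "{u', v'} \<subseteq> set ws"
    using vs(4) ws(4) by (auto simp: doubleton_eq_iff)
  moreover have "u \<in> V" "u' \<in> V" using assms(1,2) by (auto simp: conn_edge_def)
  ultimately obtain x y where "E x y" "set vs \<subseteq> side x y" "set ws \<inter> side x y = {}"
    using separating_edge[OF arcs_walk_adj[OF temporal_walk_arcs[OF vs(1)]]
        arcs_walk_adj[OF temporal_walk_arcs[OF ws(1)]]
        conn_walks_disjoint[OF vs(1,4) ws(1,4) disjoint no_conn], of u u'] by auto
  then show ?thesis using ends by blast
qed

section \<open>Induced cycles in the connectivity graph\<close>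

lemma induced_cycle_reaches_first_neighbours:
  assumes cyc: "induced_cycle V G cs" and len: "4 \<le> length cs"
  shows "reaches (cs ! 0) (cs ! 1) \<longleftrightarrow> reaches (cs ! 0) (cs ! (length cs - 1))"
proof -
  obtain c rest where cs_eq: "cs = c # rest" using len by (cases cs) auto
  have len_rest: "3 \<le> length rest" using len cs_eq by simp
  then have ne: "rest \<noteq> []" by auto
  have G_rest: "G (rest ! i) (rest ! j) \<longleftrightarrow> j = Suc i \<or> i = Suc j"
    if "i < length rest" "j < length rest" "i \<noteq> j" for i j
    using induced_cycle_edge_iff[OF cyc, of "Suc i" "Suc j"] that cs_eq by auto
  have G_c: "G c (rest ! i) \<longleftrightarrow> i = 0 \<or> i = length rest - 1" if "i < length rest" for i
    using induced_cycle_edge_iff[OF cyc, of 0 "Suc i"] that cs_eq by auto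
  have "reaches c (hd rest) \<longleftrightarrow> reaches c (last rest)"
  proof (rule reaches_along_conn_walk_iff)
    show "successively G rest" using G_rest by (simp add: successively_conv_nth)
    show "rest \<noteq> []" by (fact ne)
    show "c \<notin> set rest" using cyc cs_eq by (simp add: induced_cycle_def)
    show "successively (\<lambda>p q. \<not> (G c p \<and> G c q)) rest"
      using G_c len_rest by (auto simp: successively_conv_nth)
    show "G c (hd rest)" "G c (last rest)"
      using G_c ne by (auto simp: hd_conv_nth last_conv_nth)
  qed
  then show ?thesis using cs_eq ne by (simp add: hd_conv_nth last_conv_nth)
qed

lemma induced_cycle_reaches_neighbours:
  assumes cyc: "induced_cycle V G cs" and len: "4 \<le> length cs" and i: "i < length cs"
  shows "reaches (cs ! i) (cs ! ((i + 1) mod length cs)) \<longleftrightarrow>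
    reaches (cs ! i) (cs ! ((i + (length cs - 1)) mod length cs))"
proof -
  have "cs \<noteq> []" using i by auto
  then show ?thesis
    using induced_cycle_reaches_first_neighbours[OF induced_cycle_rotate[OF cyc, of i]] len i
    by (simp add: nth_rotate)
qed

text \<open>Every vertex of an induced cycle of length at least 4 reaches both or none of its two
  neighbours, so the direction of reachability alternates around the cycle.\<close>

lemma induced_cycle_even:
  assumes cyc: "induced_cycle V G cs" and len: "4 \<le> length cs"
  shows "even (length cs)"
proof -
  let ?n = "length cs"
  have ne: "cs \<noteq> []" using len by auto
  note rot = induced_cycle_reaches_neighbours[OF cyc len]
  have G_step: "G (cs ! i) (cs ! Suc i)" if "Suc i < ?n" for i
    using induced_cycle_edge_iff[OF cyc, of i "Suc i"] that by simp
  define \<tau> where "\<tau> i \<longleftrightarrow> reaches (cs ! i) (cs ! Suc i)" for i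
  have alternate: "\<tau> (Suc i) \<longleftrightarrow> \<not> \<tau> i" if "Suc (Suc i) < ?n" for i
  proof -
    have "Suc i + (?n - 1) = i + ?n" using that by simp
    then have "(Suc i + (?n - 1)) mod ?n = i" using that by simp
    then show ?thesis
      using rot[of "Suc i"] that conn_imp_reaches_iff[OF G_step[of i]] by (simp add: \<tau>_def)
  qed
  have parity: "\<tau> i \<longleftrightarrow> (\<tau> 0 \<longleftrightarrow> even i)" if "Suc i < ?n" for i
    using that by (induction i) (auto simp: alternate)
  have "(?n - 1 + (?n - 1)) mod ?n = ?n - 2"
  proof -
    have eq: "?n - 1 + (?n - 1) = (?n - 2) + ?n" using len by simp
    have "?n - 2 < ?n" using len by simp
    then show ?thesis unfolding eq mod_add_self2 by (rule mod_less)
  qed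
  moreover have "Suc (?n - 1) = ?n" using len by simp
  ultimately have "reaches (cs ! (?n - 1)) (cs ! 0) \<longleftrightarrow> reaches (cs ! (?n - 1)) (cs ! (?n - 2))"
    using rot[of "?n - 1"] len by simp
  moreover have "reaches (cs ! 0) (cs ! (?n - 1)) \<longleftrightarrow> \<tau> 0"
    using induced_cycle_reaches_first_neighbours[OF cyc len] by (simp add: \<tau>_def)
  moreover have "G (cs ! 0) (cs ! (?n - 1))" "G (cs ! (?n - 2)) (cs ! (?n - 1))"
    using induced_cycle_edge_iff[OF cyc, of 0 "?n - 1"] G_step[of "?n - 2"] len ne
    by (auto simp: Suc_diff_Suc numeral_2_eq_2)
  moreover have "\<tau> (?n - 2) \<longleftrightarrow> reaches (cs ! (?n - 2)) (cs ! (?n - 1))"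
    using len by (simp add: \<tau>_def Suc_diff_Suc numeral_2_eq_2)
  ultimately have "\<tau> (?n - 2) \<longleftrightarrow> \<tau> 0"
    using conn_imp_reaches_iff by blast
  moreover have "Suc (?n - 2) < ?n" using len by simp
  ultimately have "even (?n - 2)" using parity[of "?n - 2"] by blast
  then show ?thesis using len by simp
qed

lemma induced_cycle_length_lt_6:
  assumes cyc: "induced_cycle V G cs"
  shows "length cs < 6"
proof (rule ccontr)
  let ?n = "length cs"
  assume "\<not> ?n < 6"
  then have len: "6 \<le> ?n" by simp
  then have ne: "cs \<noteq> []" by auto
  have G_iff: "G (cs ! i) (cs ! j) \<longleftrightarrow>
      j = Suc i \<or> i = Suc j \<or> (i = 0 \<and> j = ?n - 1) \<or> (j = 0 \<and> i = ?n - 1)"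
    if "i < ?n" "j < ?n" "i \<noteq> j" for i j
    using induced_cycle_edge_iff[OF cyc that] .
  have "distinct cs" using cyc by (simp add: induced_cycle_def)
  then have "{cs ! 0, cs ! 1} \<inter> {cs ! 3, cs ! 4} = {}"
    using len nth_eq_iff_index_eq by fastforce
  then obtain x y where xy: "E x y" "{cs ! 0, cs ! 1} \<subseteq> side x y" "{cs ! 3, cs ! 4} \<inter> side x y = {}"
    using conn_edges_separated[of "cs ! 0" "cs ! 1" "cs ! 3" "cs ! 4"] G_iff len by force
  let ?S = "side x y"
  obtain a where a: "1 \<le> a" "a < 3" "cs ! a \<in> ?S" "cs ! Suc a \<notin> ?S"
    using exists_crossing_step[of "\<lambda>v. v \<notin> ?S" "(!) cs" 1 3] xy by auto
  obtain b where b: "4 \<le> b" "b < ?n" "cs ! b \<notin> ?S" "cs ! (Suc b mod ?n) \<in> ?S"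
    using exists_crossing_step[of "\<lambda>v. v \<in> ?S" "\<lambda>t. cs ! (t mod ?n)" 4 ?n] xy len by auto
  define b' where "b' = (if Suc b = ?n then 0 else Suc b)"
  have b': "b' < ?n" "cs ! b' \<in> ?S" using b by (auto simp: b'_def mod_Suc)
  have "G (cs ! a) (cs ! Suc a)" "G (cs ! b') (cs ! b)"
    using G_iff[of a "Suc a"] G_iff[of b' b] a b len ne by (auto simp: b'_def)
  then have "G (cs ! a) (cs ! b) \<or> G (cs ! b') (cs ! Suc a)"
    using conn_crossing_edges[OF xy(1)] a(3,4) b(3) b'(2) by blast
  then show False using G_iff[of a b] G_iff[of b' "Suc a"] a b len ne by (auto simp: b'_def split: if_splits)
qed

lemma complement_cycle_reaches_chain:
  assumes cyc: "induced_cycle V (complement_graph G) cs" and len: "6 \<le> length cs"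
    and "2 \<le> k" "k \<le> length cs - 2"
  shows "reaches (cs ! 0) (cs ! k) \<longleftrightarrow> reaches (cs ! 0) (cs ! 2)"
  using assms(3,4)
proof (induction k)
  case (Suc k)
  let ?n = "length cs"
  show ?case
  proof (cases "k = 1")
    case False
    then have k: "2 \<le> k" "Suc k \<le> ?n - 2" using Suc.prems by auto
    have ne: "cs \<noteq> []" using len by auto
    define v where "v = (if k = 2 then ?n - 1 else 1)"
    have v: "v < ?n" "v \<noteq> 0" "v \<noteq> k" "v \<noteq> Suc k" using k len by (auto simp: v_def)
    have G_iff: "G (cs ! i) (cs ! j) \<longleftrightarrow>
        \<not> (j = Suc i \<or> i = Suc j \<or> (i = 0 \<and> j = ?n - 1) \<or> (j = 0 \<and> i = ?n - 1))"
      if "i < ?n" "j < ?n" "i \<noteq> j" for i j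
      using induced_cycle_complement_edge_iff[OF cyc that] .
    have "reaches (cs ! 0) (cs ! k) \<longleftrightarrow> reaches (cs ! 0) (cs ! Suc k)"
    proof (rule reaches_iff_via_non_neighbour)
      show "G (cs ! 0) (cs ! k)" "G (cs ! 0) (cs ! Suc k)" "G (cs ! k) (cs ! v)"
        "G (cs ! v) (cs ! Suc k)" "\<not> G (cs ! 0) (cs ! v)"
        using G_iff[of 0 k] G_iff[of 0 "Suc k"] G_iff[of k v] G_iff[of v "Suc k"] G_iff[of 0 v] k v len ne
        by (auto simp: v_def)
      have "distinct cs" using cyc by (simp add: induced_cycle_def)
      then show "cs ! v \<noteq> cs ! 0" using v ne by (simp add: nth_eq_iff_index_eq)
    qed
    then show ?thesis using Suc.IH k by simp
  qed (simp add: numeral_2_eq_2)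
qed simp

text \<open>In a complement of a cycle of length at least 6, each vertex reaches all or none of its
  neighbours in the connectivity graph, which is impossible on the triangle formed by the vertices
  0, 2 and 4.\<close>

lemma complement_cycle_length_lt_6:
  assumes cyc: "induced_cycle V (complement_graph G) cs"
  shows "length cs < 6"
proof (rule ccontr)
  let ?n = "length cs"
  assume "\<not> ?n < 6"
  then have len: "6 \<le> ?n" by simp
  then have ne: "cs \<noteq> []" by auto
  have chain: "reaches (cs ! i) (cs ! ((i + j) mod ?n)) \<longleftrightarrow> reaches (cs ! i) (cs ! ((i + 2) mod ?n))"
    if "i < ?n" "2 \<le> j" "j \<le> ?n - 2" for i j
    using complement_cycle_reaches_chain[OF induced_cycle_rotate[OF cyc, of i], of j] that len ne
    by (simp add: nth_rotate)
  have "2 + (?n - 2) = ?n" "4 + (?n - 4) = ?n" "4 + (?n - 2) = 2 + ?n" using len by simp_all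
  then have mods: "(2 + (?n - 2)) mod ?n = 0" "(4 + (?n - 4)) mod ?n = 0" "(4 + (?n - 2)) mod ?n = 2"
    using len by (simp_all only: mod_self mod_add_self2) simp
  have "reaches (cs ! 0) (cs ! 4) \<longleftrightarrow> reaches (cs ! 0) (cs ! 2)"
    using complement_cycle_reaches_chain[OF cyc len, of 4] len by simp
  moreover have "reaches (cs ! 2) (cs ! 0) \<longleftrightarrow> reaches (cs ! 2) (cs ! 4)"
    using chain[of 2 "?n - 2"] len mods ne by simp
  moreover have "reaches (cs ! 4) (cs ! 0) \<longleftrightarrow> reaches (cs ! 4) (cs ! 2)"
    using chain[of 4 "?n - 4"] chain[of 4 "?n - 2"] len mods ne by simp
  moreover have "G (cs ! 0) (cs ! 2)" "G (cs ! 2) (cs ! 4)" "G (cs ! 0) (cs ! 4)"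
    using induced_cycle_complement_edge_iff[OF cyc] len ne by auto
  ultimately show False using conn_imp_reaches_iff by blast
qed

lemma no_induced_cycle_ge_5: "induced_cycle V G cs \<Longrightarrow> \<not> 5 \<le> length cs"
  using induced_cycle_length_lt_6 induced_cycle_even by fastforce

lemma no_induced_complement_cycle_ge_5: "induced_cycle V (complement_graph G) cs \<Longrightarrow> \<not> 5 \<le> length cs"
proof
  assume cyc: "induced_cycle V (complement_graph G) cs" and "5 \<le> length cs"
  then have "length cs = 5" using complement_cycle_length_lt_6[OF cyc] by simp
  then have "induced_cycle V G [cs ! 0, cs ! 2, cs ! 4, cs ! 1, cs ! 3]"
    using induced_cycle_complement_5[OF cyc _ conn_sym] by simp
  then show False using no_induced_cycle_ge_5 by fastforce
qed

end

theorem mainTheorem13: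
  fixes V :: "'a set" and A :: "('a \<times> 'a) set" and lam :: "'a \<times> 'a \<Rightarrow> nat set" and tmax :: nat
  assumes "temporal_digraph V A lam tmax"
    and "oriented_tree V A"
  shows "weakly_chordal V (conn_edge V A lam)"
proof -
  interpret temporal_oriented_tree V A lam
    using assms(2) by (rule temporal_oriented_tree.intro)
  show ?thesis
    unfolding weakly_chordal_def
    using no_induced_cycle_ge_5 no_induced_complement_cycle_ge_5 by blast
qed

end
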